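(* Let $k$ be an even positive integer and $m\geq 1$ an integer. Let $G$ be a connected graph whose complement $\overline{G}$ is isomorphic to the disjoint union of $\frac{k}{2}$ copies of the path $P_5$ (on 5 vertices) and $m$ isolated vertices. Then $G$ has exactly $k$ basis forced vertices and $\dim(G)=k+m-1$.
   Context: All graphs are finite and simple. $\overline{G}$ denotes the complement graph. For vertices $u,v$ of a connected graph $G$, $d(u,v)$ is the length of a shortest $u$–$v$ path. A set $R\subseteq V(G)$ is a resolving set if for all distinct $x,y\in V(G)$ there is $r\in R$ with $d(r,x)\neq d(r,y)$. The metric dimension $\dim(G)$ is the minimum cardinality of a resolving set, and a resolving set of cardinality $\dim(G)$ is a metric basis. A vertex is a basis forced vertex if it belongs to every metric basis of $G$. *)

theory Defs
  imports Main
begin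

definition simple_graph :: "'a set \<Rightarrow> ('a \<Rightarrow> 'a \<Rightarrow> bool) \<Rightarrow> bool" where
  "simple_graph V E \<longleftrightarrow> finite V \<and> (\<forall>x y. E x y \<longrightarrow> x \<in> V \<and> y \<in> V)
     \<and> (\<forall>x y. E x y \<longrightarrow> E y x) \<and> (\<forall>x. \<not> E x x)"

definition is_walk :: "('a \<Rightarrow> 'a \<Rightarrow> bool) \<Rightarrow> 'a list \<Rightarrow> 'a \<Rightarrow> 'a \<Rightarrow> bool" where
  "is_walk E xs u v \<longleftrightarrow> xs \<noteq> [] \<and> hd xs = u \<and> last xs = v
     \<and> (\<forall>i. Suc i < length xs \<longrightarrow> E (xs ! i) (xs ! Suc i))"

definition connected_graph :: "'a set \<Rightarrow> ('a \<Rightarrow> 'a \<Rightarrow> bool) \<Rightarrow> bool" where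
  "connected_graph V E \<longleftrightarrow> V \<noteq> {} \<and> (\<forall>u\<in>V. \<forall>v\<in>V. \<exists>xs. is_walk E xs u v)"

definition gdist :: "('a \<Rightarrow> 'a \<Rightarrow> bool) \<Rightarrow> 'a \<Rightarrow> 'a \<Rightarrow> nat" where
  "gdist E u v = (LEAST n. \<exists>xs. is_walk E xs u v \<and> length xs = Suc n)"

definition complement :: "'a set \<Rightarrow> ('a \<Rightarrow> 'a \<Rightarrow> bool) \<Rightarrow> 'a \<Rightarrow> 'a \<Rightarrow> bool" where
  "complement V E x y \<longleftrightarrow> x \<in> V \<and> y \<in> V \<and> x \<noteq> y \<and> \<not> E x y"

definition resolving_set :: "'a set \<Rightarrow> ('a \<Rightarrow> 'a \<Rightarrow> bool) \<Rightarrow> 'a set \<Rightarrow> bool" where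
  "resolving_set V E R \<longleftrightarrow> R \<subseteq> V \<and>
     (\<forall>x\<in>V. \<forall>y\<in>V. x \<noteq> y \<longrightarrow> (\<exists>r\<in>R. gdist E r x \<noteq> gdist E r y))"

definition metric_dim :: "'a set \<Rightarrow> ('a \<Rightarrow> 'a \<Rightarrow> bool) \<Rightarrow> nat" where
  "metric_dim V E = (LEAST n. \<exists>R. resolving_set V E R \<and> card R = n)"

definition metric_basis :: "'a set \<Rightarrow> ('a \<Rightarrow> 'a \<Rightarrow> bool) \<Rightarrow> 'a set \<Rightarrow> bool" where
  "metric_basis V E B \<longleftrightarrow> resolving_set V E B \<and> card B = metric_dim V E"

definition basis_forced :: "'a set \<Rightarrow> ('a \<Rightarrow> 'a \<Rightarrow> bool) \<Rightarrow> 'a \<Rightarrow> bool" where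
  "basis_forced V E v \<longleftrightarrow> v \<in> V \<and> (\<forall>B. metric_basis V E B \<longrightarrow> v \<in> B)"

definition graph_iso :: "'a set \<Rightarrow> ('a \<Rightarrow> 'a \<Rightarrow> bool) \<Rightarrow> 'b set \<Rightarrow> ('b \<Rightarrow> 'b \<Rightarrow> bool) \<Rightarrow> bool" where
  "graph_iso V E W F \<longleftrightarrow> (\<exists>f. bij_betw f V W \<and> (\<forall>x\<in>V. \<forall>y\<in>V. E x y \<longleftrightarrow> F (f x) (f y)))"

text \<open>Disjoint union of p copies of the path P5 (vertices Inl (i,j), i<p, j<5, path 0-1-2-3-4)
  and q isolated vertices (Inr i, i<q).\<close>
definition paths_iso_verts :: "nat \<Rightarrow> nat \<Rightarrow> ((nat \<times> nat) + nat) set" where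
  "paths_iso_verts p q = Inl ` ({..<p} \<times> {..<5}) \<union> Inr ` {..<q}"

fun paths_iso_edge :: "nat \<Rightarrow> (nat \<times> nat) + nat \<Rightarrow> (nat \<times> nat) + nat \<Rightarrow> bool" where
  "paths_iso_edge p (Inl (i, j)) (Inl (i', j')) \<longleftrightarrow>
     i < p \<and> i' = i \<and> j < 5 \<and> j' < 5 \<and> (j' = Suc j \<or> j = Suc j')"
| "paths_iso_edge p _ _ \<longleftrightarrow> False"

end

theory Submission
  imports Defs
begin

(* The isolated vertices of the complement are universal vertices of G, so all distances in G
   are 0, 1 or 2, and a vertex r resolves two vertices other than itself iff it is adjacent to
   exactly one of them, in G or, equivalently, in the complement. The problem thus becomes one
   about such "adjacency resolving" sets of the disjoint union of k/2 paths P5 and m isolated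
   vertices. Such a set meets every path in at least two vertices and contains all isolated
   vertices but one, so it has at least k + m - 1 elements. If it has exactly that many, some
   isolated vertex is missing from it, so every path vertex outside the set needs a neighbour in
   the set; on P5 two vertices achieve this only as the second and fourth vertex, which are
   therefore forced. Those vertices together with all isolated vertices but one do resolve. *)

definition adjacency_resolving :: "'a set \<Rightarrow> ('a \<Rightarrow> 'a \<Rightarrow> bool) \<Rightarrow> 'a set \<Rightarrow> bool" where
  "adjacency_resolving V E R \<longleftrightarrow> R \<subseteq> V \<and>
     (\<forall>x\<in>V. \<forall>y\<in>V. x \<noteq> y \<longrightarrow> x \<in> R \<or> y \<in> R \<or> (\<exists>r\<in>R. E r x \<noteq> E r y))"

lemma adjacency_resolving_complement:
  "adjacency_resolving V (complement V E) R \<longleftrightarrow> adjacency_resolving V E R"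
proof -
  have "x \<in> R \<or> y \<in> R \<or> (\<exists>r\<in>R. complement V E r x \<noteq> complement V E r y) \<longleftrightarrow>
        x \<in> R \<or> y \<in> R \<or> (\<exists>r\<in>R. E r x \<noteq> E r y)"
    if "R \<subseteq> V" "x \<in> V" "y \<in> V" for x y
    using that unfolding complement_def by blast
  then show ?thesis
    unfolding adjacency_resolving_def by blast
qed

lemma is_walk_length_1: "is_walk E xs u v \<Longrightarrow> length xs = 1 \<Longrightarrow> u = v"
  unfolding is_walk_def by (cases xs) auto

lemma is_walk_length_2: "is_walk E xs u v \<Longrightarrow> length xs = 2 \<Longrightarrow> E u v"
  unfolding is_walk_def by (cases xs rule: remdups_adj.cases) auto

lemma gdist_self: "gdist E u u = 0"
  unfolding gdist_def by (rule Least_equality) (auto intro!: exI[of _ "[u]"] simp: is_walk_def)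

lemma gdist_eq_1:
  assumes "u \<noteq> v" and "E u v"
  shows "gdist E u v = 1"
  unfolding gdist_def
proof (rule Least_equality)
  show "\<exists>xs. is_walk E xs u v \<and> length xs = Suc 1"
    using assms by (intro exI[of _ "[u, v]"]) (simp add: is_walk_def)
  show "1 \<le> n" if "\<exists>xs. is_walk E xs u v \<and> length xs = Suc n" for n
    using that assms(1) is_walk_length_1 by (cases n) fastforce+
qed

lemma gdist_eq_2:
  assumes "u \<noteq> v" and "\<not> E u v" and "E u w" and "E w v"
  shows "gdist E u v = 2"
  unfolding gdist_def
proof (rule Least_equality)
  show "\<exists>xs. is_walk E xs u v \<and> length xs = Suc 2"
    using assms(3,4) by (intro exI[of _ "[u, w, v]"]) (simp add: is_walk_def less_Suc_eq nth_Cons')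
  show "2 \<le> n" if "\<exists>xs. is_walk E xs u v \<and> length xs = Suc n" for n
  proof (rule ccontr)
    assume "\<not> 2 \<le> n"
    then have "n = 0 \<or> n = 1" by arith
    then show False using that assms(1,2) is_walk_length_1 is_walk_length_2 by fastforce
  qed
qed

lemma gdist_universal_vertex:
  assumes "simple_graph V E" and "z \<in> V" and "\<And>x. x \<in> V \<Longrightarrow> x \<noteq> z \<Longrightarrow> E z x"
    and "u \<in> V" and "v \<in> V"
  shows "gdist E u v = (if u = v then 0 else if E u v then 1 else 2)"
proof -
  have "gdist E u v = 2" if "u \<noteq> v" "\<not> E u v"
  proof (rule gdist_eq_2[where w = z])
    show "u \<noteq> v" "\<not> E u v" by fact+
    have "u \<noteq> z" "v \<noteq> z" using that assms(3-5) \<open>simple_graph V E\<close>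
      unfolding simple_graph_def by blast+
    with assms show "E u z" "E z v" unfolding simple_graph_def by blast+
  qed
  then show ?thesis by (simp add: gdist_self gdist_eq_1)
qed

lemma resolving_set_iff_adjacency_resolving:
  assumes "simple_graph V E" and "z \<in> V" and "\<And>x. x \<in> V \<Longrightarrow> x \<noteq> z \<Longrightarrow> E z x"
  shows "resolving_set V E R \<longleftrightarrow> adjacency_resolving V E R"
proof -
  have "(\<exists>r\<in>R. gdist E r x \<noteq> gdist E r y) \<longleftrightarrow>
        x \<in> R \<or> y \<in> R \<or> (\<exists>r\<in>R. E r x \<noteq> E r y)"
    if "R \<subseteq> V" "x \<in> V" "y \<in> V" "x \<noteq> y" for x y
  proof -
    have "gdist E r x \<noteq> gdist E r y \<longleftrightarrow> r = x \<or> r = y \<or> E r x \<noteq> E r y" if "r \<in> R" for r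
    proof -
      have "r \<in> V" using that \<open>R \<subseteq> V\<close> by blast
      with \<open>x \<in> V\<close> \<open>y \<in> V\<close> \<open>x \<noteq> y\<close> show ?thesis
        by (simp add: gdist_universal_vertex[OF assms])
    qed
    then show ?thesis by blast
  qed
  then show ?thesis
    unfolding resolving_set_def adjacency_resolving_def by blast
qed

locale graph_isomorphism =
  fixes V :: "'a set" and E :: "'a \<Rightarrow> 'a \<Rightarrow> bool"
    and W :: "'b set" and F :: "'b \<Rightarrow> 'b \<Rightarrow> bool" and f :: "'a \<Rightarrow> 'b"
  assumes simple_source: "simple_graph V E" and simple_target: "simple_graph W F"
    and bij: "bij_betw f V W"
    and edge_iff: "\<And>x y. x \<in> V \<Longrightarrow> y \<in> V \<Longrightarrow> E x y \<longleftrightarrow> F (f x) (f y)"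
begin

lemma inverse: "graph_isomorphism W F V E (inv_into V f)"
proof
  show "bij_betw (inv_into V f) W V" using bij by (rule bij_betw_inv_into)
  show "F x y \<longleftrightarrow> E (inv_into V f x) (inv_into V f y)" if "x \<in> W" "y \<in> W" for x y
    using that bij edge_iff[of "inv_into V f x" "inv_into V f y"]
    by (simp add: bij_betw_inv_into_right inv_into_into bij_betw_imp_surj_on)
qed (fact simple_target simple_source)+

lemma is_walk_map:
  assumes "is_walk E xs u v" and "u \<in> V"
  shows "is_walk F (map f xs) (f u) (f v)"
proof -
  have "set xs \<subseteq> V"
  proof
    fix x assume "x \<in> set xs"
    then obtain i where "i < length xs" "x = xs ! i" by (auto simp: in_set_conv_nth)
    with assms simple_source show "x \<in> V"
      unfolding is_walk_def simple_graph_def by (cases i) (auto simp: hd_conv_nth)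
  qed
  with assms show ?thesis
    unfolding is_walk_def by (auto simp: hd_map last_map edge_iff[symmetric] subsetD)
qed

lemma gdist_eq:
  assumes "u \<in> V" and "v \<in> V"
  shows "gdist F (f u) (f v) = gdist E u v"
proof -
  interpret inv: graph_isomorphism W F V E "inv_into V f" by (rule inverse)
  have fu: "f u \<in> W" and inv_fu: "inv_into V f (f u) = u" and inv_fv: "inv_into V f (f v) = v"
    using assms bij by (auto simp: bij_betw_def)
  have "(\<exists>ys. is_walk F ys (f u) (f v) \<and> length ys = Suc n) \<longleftrightarrow>
        (\<exists>xs. is_walk E xs u v \<and> length xs = Suc n)" for n
    using is_walk_map[OF _ assms(1)] inv.is_walk_map[OF _ fu] inv_fu inv_fv
    by (metis length_map)
  then show ?thesis unfolding gdist_def by simp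
qed

lemma card_image_eq: "R \<subseteq> V \<Longrightarrow> card (f ` R) = card R"
  using bij by (meson bij_betw_def card_image inj_on_subset)

lemma resolving_set_image:
  assumes "resolving_set V E R"
  shows "resolving_set W F (f ` R)"
proof -
  have "R \<subseteq> V" using assms unfolding resolving_set_def by blast
  have "W = f ` V" using bij by (simp add: bij_betw_def)
  moreover have "\<exists>r\<in>R. gdist F (f r) (f x) \<noteq> gdist F (f r) (f y)" if "x \<in> V" "y \<in> V" "f x \<noteq> f y" for x y
    using assms that \<open>R \<subseteq> V\<close> gdist_eq unfolding resolving_set_def by (metis subsetD)
  ultimately show ?thesis
    using \<open>R \<subseteq> V\<close> unfolding resolving_set_def by auto
qed

lemma resolving_set_transfer:
  "resolving_set V E R \<Longrightarrow> \<exists>S. resolving_set W F S \<and> card S = card R"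
  using resolving_set_image card_image_eq unfolding resolving_set_def by metis

lemma metric_dim_eq: "metric_dim W F = metric_dim V E"
proof -
  interpret inv: graph_isomorphism W F V E "inv_into V f" by (rule inverse)
  show ?thesis
    unfolding metric_dim_def using resolving_set_transfer inv.resolving_set_transfer by metis
qed

lemma metric_basis_image: "metric_basis V E B \<Longrightarrow> metric_basis W F (f ` B)"
  using resolving_set_image card_image_eq metric_dim_eq
  unfolding metric_basis_def resolving_set_def by metis

lemma basis_forced_image:
  assumes "basis_forced V E v"
  shows "basis_forced W F (f v)"
proof -
  interpret inv: graph_isomorphism W F V E "inv_into V f" by (rule inverse)
  have "f v \<in> B" if "metric_basis W F B" for B
  proof -
    have "B \<subseteq> W" using that unfolding metric_basis_def resolving_set_def by blast
    have "v \<in> inv_into V f ` B" using assms inv.metric_basis_image[OF that] unfolding basis_forced_def by blast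
    with \<open>B \<subseteq> W\<close> bij show ?thesis by (auto simp: bij_betw_inv_into_right)
  qed
  moreover have "f v \<in> W" using assms bij unfolding basis_forced_def by (auto simp: bij_betw_def)
  ultimately show ?thesis unfolding basis_forced_def by blast
qed

lemma card_basis_forced_eq:
  "card {w \<in> W. basis_forced W F w} = card {v \<in> V. basis_forced V E v}"
proof -
  interpret inv: graph_isomorphism W F V E "inv_into V f" by (rule inverse)
  have "{w \<in> W. basis_forced W F w} = f ` {v \<in> V. basis_forced V E v}"
  proof
    show "f ` {v \<in> V. basis_forced V E v} \<subseteq> {w \<in> W. basis_forced W F w}"
      using basis_forced_image unfolding basis_forced_def by blast
    show "{w \<in> W. basis_forced W F w} \<subseteq> f ` {v \<in> V. basis_forced V E v}"
      using inv.basis_forced_image bij unfolding basis_forced_def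
      by (auto simp: bij_betw_inv_into_right intro!: image_eqI)
  qed
  then show ?thesis by (simp add: card_image_eq)
qed

end

definition path_edge :: "nat \<Rightarrow> nat \<Rightarrow> nat \<Rightarrow> bool" where
  "path_edge n i j \<longleftrightarrow> i < n \<and> j < n \<and> (j = Suc i \<or> i = Suc j)"

lemma card_ge_2_if_adjacency_resolving_path_5:
  assumes "adjacency_resolving {..<5} (path_edge 5) T"
  shows "2 \<le> card T"
proof -
  have "T \<in> Pow {0, 1, 2, 3, 4}" using assms unfolding adjacency_resolving_def by auto
  with assms show ?thesis
    unfolding Pow_insert Pow_empty
    by (simp add: adjacency_resolving_def path_edge_def lessThan_Suc numeral_eq_Suc)
      (elim disjE; simp)
qed

lemma adjacency_resolving_path_5_dominating_card_2:
  assumes "adjacency_resolving {..<5} (path_edge 5) T"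
    and "\<forall>j<5. j \<notin> T \<longrightarrow> (\<exists>l\<in>T. path_edge 5 l j)" and "card T = 2"
  shows "T = {1, 3}"
proof -
  have "T \<in> Pow {0, 1, 2, 3, 4}" using assms unfolding adjacency_resolving_def by auto
  with assms show ?thesis
    unfolding Pow_insert Pow_empty
    by (simp add: adjacency_resolving_def path_edge_def lessThan_Suc numeral_eq_Suc)
      (elim disjE; auto simp: All_less_Suc)
qed

lemma paths_iso_edge_Inr [simp]: "paths_iso_edge p x (Inr a) = False"
  by (cases x) auto

lemma paths_iso_edge_Inl_Inl:
  "paths_iso_edge p (Inl (i, j)) (Inl (i', j')) \<longleftrightarrow> i < p \<and> i' = i \<and> path_edge 5 j j'"
  by (auto simp: path_edge_def)

lemma paths_iso_edge_to_InlD: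
  "paths_iso_edge p r (Inl (i, j)) \<Longrightarrow> \<exists>l. r = Inl (i, l)"
  by (cases "(p, r, Inl (i, j) :: (nat \<times> nat) + nat)" rule: paths_iso_edge.cases) auto

lemma paths_iso_edge_sym: "paths_iso_edge p x y \<Longrightarrow> paths_iso_edge p y x"
  by (cases "(p, x, y)" rule: paths_iso_edge.cases) auto

lemma simple_graph_complement:
  assumes "finite V" and "\<And>x y. E x y \<Longrightarrow> E y x"
  shows "simple_graph V (complement V E)"
  using assms unfolding simple_graph_def complement_def by blast

lemma graph_iso_complement:
  assumes "simple_graph V E" and "graph_iso V (complement V E) W F"
  shows "graph_iso V E W (complement W F)"
proof -
  obtain f where f: "bij_betw f V W"
    and iso: "\<And>x y. x \<in> V \<Longrightarrow> y \<in> V \<Longrightarrow> complement V E x y \<longleftrightarrow> F (f x) (f y)"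
    using assms(2) unfolding graph_iso_def by blast
  have "E x y \<longleftrightarrow> complement W F (f x) (f y)" if "x \<in> V" "y \<in> V" for x y
  proof -
    have "f x \<in> W" "f y \<in> W" "f x = f y \<longleftrightarrow> x = y"
      using f that by (auto simp: bij_betw_def inj_on_eq_iff)
    then show ?thesis
      using assms(1) iso[OF that] that unfolding simple_graph_def complement_def by auto
  qed
  with f show ?thesis unfolding graph_iso_def by blast
qed

abbreviation paths_iso_complement :: "nat \<Rightarrow> nat \<Rightarrow> ((nat \<times> nat) + nat) \<Rightarrow> ((nat \<times> nat) + nat) \<Rightarrow> bool" where
  "paths_iso_complement p m \<equiv> complement (paths_iso_verts p m) (paths_iso_edge p)"

lemma simple_graph_complement_paths_iso:
  "simple_graph (paths_iso_verts p m) (paths_iso_complement p m)"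
  by (rule simple_graph_complement) (auto simp: paths_iso_verts_def paths_iso_edge_sym)

lemma resolving_set_complement_paths_iso:
  assumes "0 < m"
  shows "resolving_set (paths_iso_verts p m) (paths_iso_complement p m) S
     \<longleftrightarrow> adjacency_resolving (paths_iso_verts p m) (paths_iso_edge p) S"
proof -
  have "Inr 0 \<in> paths_iso_verts p m"
    using assms by (simp add: paths_iso_verts_def)
  with simple_graph_complement_paths_iso show ?thesis
    by (subst resolving_set_iff_adjacency_resolving[where z = "Inr 0"])
      (auto simp: complement_def adjacency_resolving_complement)
qed

lemma card_subset_paths_iso_verts:
  assumes "S \<subseteq> paths_iso_verts p m"
  shows "card S = (\<Sum>i<p. card {j. Inl (i, j) \<in> S}) + card {a. Inr a \<in> S}"
proof -
  have "S = Inl ` (SIGMA i:{..<p}. {j. Inl (i, j) \<in> S}) \<union> Inr ` {a. Inr a \<in> S}"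
    using assms by (fastforce simp: paths_iso_verts_def)
  moreover have "finite {j. Inl (i, j) \<in> S}" for i
    using assms by (auto simp: paths_iso_verts_def intro: finite_subset[of _ "{..<5}"])
  moreover have "finite {a. Inr a \<in> S}"
    using assms by (auto simp: paths_iso_verts_def intro: finite_subset[of _ "{..<m}"])
  ultimately show ?thesis
    by (subst (1) \<open>S = _\<close>, subst card_Un_disjoint) (auto simp: card_image card_SigmaI)
qed

context
  fixes p m :: nat and S :: "((nat \<times> nat) + nat) set"
  assumes resolving: "adjacency_resolving (paths_iso_verts p m) (paths_iso_edge p) S"
begin

lemma adjacency_resolving_paths_iso_subset: "S \<subseteq> paths_iso_verts p m"
  using resolving unfolding adjacency_resolving_def by blast

lemma adjacency_resolving_paths_iso_separates:
  assumes "x \<in> paths_iso_verts p m" and "y \<in> paths_iso_verts p m" and "x \<noteq> y"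
    and "x \<notin> S" and "y \<notin> S"
  shows "\<exists>r\<in>S. paths_iso_edge p r x \<noteq> paths_iso_edge p r y"
proof -
  have "x \<in> S \<or> y \<in> S \<or> (\<exists>r\<in>S. paths_iso_edge p r x \<noteq> paths_iso_edge p r y)"
    using resolving assms(1-3) unfolding adjacency_resolving_def by blast
  with assms(4,5) show ?thesis by blast
qed

lemma adjacency_resolving_path_part:
  assumes "i < p"
  shows "adjacency_resolving {..<5} (path_edge 5) {j. Inl (i, j) \<in> S}"
  unfolding adjacency_resolving_def
proof (intro conjI ballI impI)
  show "{j. Inl (i, j) \<in> S} \<subseteq> {..<5}"
    using adjacency_resolving_paths_iso_subset by (auto simp: paths_iso_verts_def)
  fix j j' :: nat
  assume "j \<in> {..<5}" "j' \<in> {..<5}" "j \<noteq> j'"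
  with assms have "Inl (i, j) \<in> paths_iso_verts p m" "Inl (i, j') \<in> paths_iso_verts p m"
    "Inl (i, j) \<noteq> Inl (i, j')"
    by (auto simp: paths_iso_verts_def)
  then show "j \<in> {j. Inl (i, j) \<in> S} \<or> j' \<in> {j. Inl (i, j) \<in> S} \<or>
      (\<exists>l\<in>{j. Inl (i, j) \<in> S}. path_edge 5 l j \<noteq> path_edge 5 l j')"
  proof (cases "Inl (i, j) \<in> S \<or> Inl (i, j') \<in> S")
    case False
    then obtain r where r: "r \<in> S" "paths_iso_edge p r (Inl (i, j)) \<noteq> paths_iso_edge p r (Inl (i, j'))"
      using adjacency_resolving_paths_iso_separates[OF \<open>Inl (i, j) \<in> _\<close> \<open>Inl (i, j') \<in> _\<close> \<open>Inl (i, j) \<noteq> _\<close>]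
      by blast
    then have "paths_iso_edge p r (Inl (i, j)) \<or> paths_iso_edge p r (Inl (i, j'))" by blast
    then obtain l where "r = Inl (i, l)" using paths_iso_edge_to_InlD by blast
    with r assms have "l \<in> {j. Inl (i, j) \<in> S}" "path_edge 5 l j \<noteq> path_edge 5 l j'"
      by (simp_all add: paths_iso_edge_Inl_Inl del: paths_iso_edge.simps)
    then show ?thesis by blast
  qed auto
qed

lemma isolated_part_subset: "{a. Inr a \<in> S} \<subseteq> {..<m}"
  using adjacency_resolving_paths_iso_subset by (auto simp: paths_iso_verts_def)

lemma card_isolated_part_ge: "m - 1 \<le> card {a. Inr a \<in> S}"
proof -
  have "card ({..<m} - {a. Inr a \<in> S}) \<le> Suc 0"
  proof (subst card_le_Suc0_iff_eq, simp, intro ballI)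
    fix a b assume a: "a \<in> {..<m} - {a. Inr a \<in> S}" and b: "b \<in> {..<m} - {a. Inr a \<in> S}"
    show "a = b"
    proof (rule ccontr)
      assume "a \<noteq> b"
      moreover have "Inr a \<in> paths_iso_verts p m" "Inr b \<in> paths_iso_verts p m" "Inr a \<notin> S" "Inr b \<notin> S"
        using a b by (auto simp: paths_iso_verts_def)
      ultimately show False
        using adjacency_resolving_paths_iso_separates[of "Inr a" "Inr b"] by simp
    qed
  qed
  with isolated_part_subset show ?thesis
    by (simp add: card_Diff_subset finite_subset)
qed

lemma path_part_dominating:
  assumes "t < m" and "Inr t \<notin> S" and "i < p" and "j < 5" and "Inl (i, j) \<notin> S"
  shows "\<exists>l\<in>{j. Inl (i, j) \<in> S}. path_edge 5 l j"
proof -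
  have "Inr t \<in> paths_iso_verts p m" "Inl (i, j) \<in> paths_iso_verts p m"
    using assms by (auto simp: paths_iso_verts_def)
  then obtain r where r: "r \<in> S" "paths_iso_edge p r (Inl (i, j))"
    using adjacency_resolving_paths_iso_separates[of "Inr t" "Inl (i, j)"] assms(2,5) by auto
  moreover from r(2) obtain l where "r = Inl (i, l)" using paths_iso_edge_to_InlD by blast
  ultimately show ?thesis
    by (auto simp: paths_iso_edge_Inl_Inl simp del: paths_iso_edge.simps)
qed

lemma card_path_parts_ge: "2 * p \<le> (\<Sum>i<p. card {j. Inl (i, j) \<in> S})"
proof -
  have "(\<Sum>i<p. 2) \<le> (\<Sum>i<p. card {j. Inl (i, j) \<in> S})"
    by (intro sum_mono card_ge_2_if_adjacency_resolving_path_5 adjacency_resolving_path_part) simp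
  then show ?thesis by simp
qed

lemma card_adjacency_resolving_paths_iso_ge: "2 * p + m - 1 \<le> card S"
  using card_subset_paths_iso_verts[OF adjacency_resolving_paths_iso_subset] card_path_parts_ge card_isolated_part_ge
  by linarith

lemma forced_subset_adjacency_resolving_paths_iso:
  assumes "0 < m" and "card S = 2 * p + m - 1"
  shows "Inl ` ({..<p} \<times> {1, 3}) \<subseteq> S"
proof -
  have sum_eq: "(\<Sum>i<p. card {j. Inl (i, j) \<in> S}) = (\<Sum>i<p. 2)"
    and isolated_eq: "card {a. Inr a \<in> S} = m - 1"
    using assms card_subset_paths_iso_verts[OF adjacency_resolving_paths_iso_subset] card_path_parts_ge card_isolated_part_ge
    by simp_all
  obtain t where "t < m" "Inr t \<notin> S"
  proof -
    have "\<not> {..<m} \<subseteq> {a. Inr a \<in> S}"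
    proof
      assume "{..<m} \<subseteq> {a. Inr a \<in> S}"
      with isolated_part_subset have "{a. Inr a \<in> S} = {..<m}" by blast
      with isolated_eq assms(1) show False by simp
    qed
    then show ?thesis using that by auto
  qed
  have "{j. Inl (i, j) \<in> S} = {1, 3}" if "i < p" for i
  proof (rule adjacency_resolving_path_5_dominating_card_2)
    show "adjacency_resolving {..<5} (path_edge 5) {j. Inl (i, j) \<in> S}"
      using that by (rule adjacency_resolving_path_part)
    show "\<forall>j<5. j \<notin> {j. Inl (i, j) \<in> S} \<longrightarrow> (\<exists>l\<in>{j. Inl (i, j) \<in> S}. path_edge 5 l j)"
      using path_part_dominating[OF \<open>t < m\<close> \<open>Inr t \<notin> S\<close> that] by blast
    have "2 \<le> card {j. Inl (i', j) \<in> S}" if "i' \<in> {..<p}" for i'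
      using that by (simp add: card_ge_2_if_adjacency_resolving_path_5 adjacency_resolving_path_part)
    from sum_mono_inv[OF sum_eq[symmetric] this] that show "card {j. Inl (i, j) \<in> S} = 2"
      by simp
  qed
  then show ?thesis by auto
qed

end

definition paths_iso_landmarks :: "nat \<Rightarrow> nat \<Rightarrow> nat \<Rightarrow> ((nat \<times> nat) + nat) set" where
  "paths_iso_landmarks p m t = Inl ` ({..<p} \<times> {1, 3}) \<union> Inr ` ({..<m} - {t})"

lemma card_paths_iso_landmarks:
  assumes "t < m"
  shows "card (paths_iso_landmarks p m t) = 2 * p + m - 1"
proof -
  have "card (paths_iso_landmarks p m t) = card ({..<p} \<times> {1::nat, 3}) + card ({..<m} - {t})"
    unfolding paths_iso_landmarks_def
    by (subst card_Un_disjoint) (auto simp: card_image)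
  with assms show ?thesis by (simp add: card_cartesian_product)
qed

lemma adjacency_resolving_paths_iso_landmarks:
  assumes "t < m"
  shows "adjacency_resolving (paths_iso_verts p m) (paths_iso_edge p) (paths_iso_landmarks p m t)"
  unfolding adjacency_resolving_def
proof (intro conjI ballI impI)
  let ?L = "paths_iso_landmarks p m t"
  show "?L \<subseteq> paths_iso_verts p m"
    unfolding paths_iso_landmarks_def paths_iso_verts_def by auto
  have non_landmark: "x = Inr t \<or> (\<exists>i j. x = Inl (i, j) \<and> i < p \<and> j \<in> {0, 2, 4})"
    if "x \<in> paths_iso_verts p m" "x \<notin> ?L" for x
    using that unfolding paths_iso_verts_def paths_iso_landmarks_def by auto
  have distinguished: "paths_iso_edge p (Inl (i, 1)) (Inl (i, j)) \<noteq> paths_iso_edge p (Inl (i, 1)) y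
      \<or> paths_iso_edge p (Inl (i, 3)) (Inl (i, j)) \<noteq> paths_iso_edge p (Inl (i, 3)) y"
    if "i < p" "j \<in> {0, 2, 4}" "y = Inr t \<or> (\<exists>i' j'. y = Inl (i', j') \<and> i' < p \<and> j' \<in> {0, 2, 4})"
      "y \<noteq> Inl (i, j)" for i j y
    using that by auto
  have "Inl (i, 1) \<in> ?L" "Inl (i, 3) \<in> ?L" if "i < p" for i
    using that unfolding paths_iso_landmarks_def by auto
  fix x y assume "x \<in> paths_iso_verts p m" "y \<in> paths_iso_verts p m" "x \<noteq> y"
  then show "x \<in> ?L \<or> y \<in> ?L \<or> (\<exists>r\<in>?L. paths_iso_edge p r x \<noteq> paths_iso_edge p r y)"
    using non_landmark distinguished \<open>\<And>i. i < p \<Longrightarrow> Inl (i, 1) \<in> ?L\<close> \<open>\<And>i. i < p \<Longrightarrow> Inl (i, 3) \<in> ?L\<close>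
    by (smt (verit))
qed

lemma metric_dim_paths_iso_complement:
  assumes "0 < m"
  shows "metric_dim (paths_iso_verts p m) (paths_iso_complement p m) = 2 * p + m - 1"
  unfolding metric_dim_def
proof (rule Least_equality)
  show "\<exists>R. resolving_set (paths_iso_verts p m) (paths_iso_complement p m) R \<and> card R = 2 * p + m - 1"
  proof (intro exI conjI)
    show "resolving_set (paths_iso_verts p m) (paths_iso_complement p m) (paths_iso_landmarks p m 0)"
      using assms by (simp add: resolving_set_complement_paths_iso adjacency_resolving_paths_iso_landmarks)
    show "card (paths_iso_landmarks p m 0) = 2 * p + m - 1"
      using assms by (rule card_paths_iso_landmarks)
  qed
  show "2 * p + m - 1 \<le> n"
    if "\<exists>R. resolving_set (paths_iso_verts p m) (paths_iso_complement p m) R \<and> card R = n" for n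
    using that assms card_adjacency_resolving_paths_iso_ge
    by (auto simp: resolving_set_complement_paths_iso)
qed

lemma basis_forced_paths_iso_complement:
  assumes "0 < m"
  shows "{w \<in> paths_iso_verts p m. basis_forced (paths_iso_verts p m) (paths_iso_complement p m) w}
    = Inl ` ({..<p} \<times> {1, 3})"
proof -
  have basis_iff: "metric_basis (paths_iso_verts p m) (paths_iso_complement p m) B \<longleftrightarrow>
      adjacency_resolving (paths_iso_verts p m) (paths_iso_edge p) B \<and> card B = 2 * p + m - 1" for B
    using assms by (simp add: metric_basis_def metric_dim_paths_iso_complement resolving_set_complement_paths_iso)
  have "w \<in> Inl ` ({..<p} \<times> {1, 3})" if "w \<in> paths_iso_verts p m" and
    forced: "\<And>B. metric_basis (paths_iso_verts p m) (paths_iso_complement p m) B \<Longrightarrow> w \<in> B" for w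
  proof -
    obtain t where "t < m" "w \<notin> Inr ` ({..<m} - {t})"
      using assms that(1) by (cases w) (auto simp: paths_iso_verts_def)
    moreover have "w \<in> paths_iso_landmarks p m t"
      using forced basis_iff adjacency_resolving_paths_iso_landmarks card_paths_iso_landmarks \<open>t < m\<close>
      by blast
    ultimately show ?thesis unfolding paths_iso_landmarks_def by blast
  qed
  moreover have "Inl ` ({..<p} \<times> {1, 3}) \<subseteq> paths_iso_verts p m"
    unfolding paths_iso_verts_def by auto
  moreover have "Inl ` ({..<p} \<times> {1, 3}) \<subseteq> B"
    if "metric_basis (paths_iso_verts p m) (paths_iso_complement p m) B" for B
    using that assms basis_iff forced_subset_adjacency_resolving_paths_iso by blast
  ultimately show ?thesis unfolding basis_forced_def by blast
qed

theorem lemma9: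
  fixes V :: "'a set" and E :: "'a \<Rightarrow> 'a \<Rightarrow> bool" and k m :: nat
  assumes "k > 0" and "even k" and "m \<ge> 1"
    and "simple_graph V E" and "connected_graph V E"
    and "graph_iso V (complement V E) (paths_iso_verts (k div 2) m) (paths_iso_edge (k div 2))"
  shows "card {v \<in> V. basis_forced V E v} = k \<and> metric_dim V E = k + m - 1"
proof -
  define p where "p = k div 2"
  have k: "k = 2 * p" using \<open>even k\<close> unfolding p_def by simp
  have "0 < m" using \<open>m \<ge> 1\<close> by simp
  obtain f where f: "bij_betw f V (paths_iso_verts p m)"
    and edges: "\<And>x y. x \<in> V \<Longrightarrow> y \<in> V \<Longrightarrow> E x y \<longleftrightarrow> paths_iso_complement p m (f x) (f y)"
    using graph_iso_complement[OF assms(4,6)] unfolding graph_iso_def p_def by blast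
  interpret graph_isomorphism V E "paths_iso_verts p m" "paths_iso_complement p m" f
    using assms(4) simple_graph_complement_paths_iso f edges by (rule graph_isomorphism.intro)
  have "card {v \<in> V. basis_forced V E v} = card (Inl ` ({..<p} \<times> {1::nat, 3}) :: ((nat \<times> nat) + nat) set)"
    using card_basis_forced_eq basis_forced_paths_iso_complement[OF \<open>0 < m\<close>] by simp
  also have "\<dots> = k"
    using k by (simp add: card_image card_cartesian_product)
  finally show ?thesis
    using metric_dim_eq metric_dim_paths_iso_complement[OF \<open>0 < m\<close>] k by simp
qed

end
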